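(* Let $\mathcal C\subseteq\mathcal L_{n,q}$ be an $\mathbb F_{q^n}$-linear code of dimension $k$. Then $(\mathcal C^{[i]})^{\perp}=(\mathcal C^{\perp})^{[i]}$ for each $i\in\{0,\ldots,n-1\}$. Consequently $h(\mathcal C^\perp)=n-2k+h(\mathcal C)$.
   Context: $q$ is a prime power, $[i]:=q^i$. $\mathcal L_{n,q}$ is the $\mathbb F_{q^n}$-vector space of linearized polynomials $f(x)=\sum_{i=0}^{n-1}f_ix^{[i]}$, $f_i\in\mathbb F_{q^n}$. For $f(x)=\sum_i f_ix^{[i]}$, $f(x)^{[j]}:=x^{[j]}\circ f(x)=\sum_i f_i^{[j]}x^{[(i+j)\bmod n]}$, and $\mathcal C^{[j]}=\{f^{[j]}\colon f\in\mathcal C\}$. The Delsarte dual is $\mathcal C^\perp=\{f\in\mathcal L_{n,q}\colon b(f,g)=0\ \forall g\in\mathcal C\}$, where $b(f,g)=\mathrm{Tr}_{q^n/q}\big(\sum_{i=0}^{n-1}f_ig_i\big)$ and $\mathrm{Tr}_{q^n/q}(x)=x+x^{[1]}+\cdots+x^{[n-1]}$. For a code $\mathcal C$, $h(\mathcal C):=\max\{\dim(\mathcal C\cap\mathcal C^{[j]})\colon j=1,\ldots,n-1,\ \gcd(j,n)=1\}$. *)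

theory Defs
  imports Complex_Main "HOL-Computational_Algebra.Primes" "HOL-Library.Function_Algebras"
begin

(* Linearized polynomials f = sum_{i<n} f_i x^[i] over F_{q^n} are represented by their
   coefficient sequences f :: nat => 'a with f i = 0 for i >= n.  The field F_{q^n} is a
   finite field type 'a with CARD('a) = q^n. *)

definition Lnq :: "nat \<Rightarrow> (nat \<Rightarrow> 'a::zero) set" where
  "Lnq n = {f. \<forall>i\<ge>n. f i = 0}"

definition scal :: "'a::times \<Rightarrow> (nat \<Rightarrow> 'a) \<Rightarrow> (nat \<Rightarrow> 'a)" where
  "scal c f = (\<lambda>i. c * f i)"

definition trace :: "nat \<Rightarrow> nat \<Rightarrow> 'a::comm_ring_1 \<Rightarrow> 'a" where
  "trace q n x = (\<Sum>i<n. x ^ (q ^ i))"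

definition bform :: "nat \<Rightarrow> nat \<Rightarrow> (nat \<Rightarrow> 'a::comm_ring_1) \<Rightarrow> (nat \<Rightarrow> 'a) \<Rightarrow> 'a" where
  "bform q n f g = trace q n (\<Sum>i<n. f i * g i)"

definition ddual :: "nat \<Rightarrow> nat \<Rightarrow> (nat \<Rightarrow> 'a::comm_ring_1) set \<Rightarrow> (nat \<Rightarrow> 'a) set" where
  "ddual q n C = {f \<in> Lnq n. \<forall>g\<in>C. bform q n f g = 0}"

(* f^[j] = x^[j] o f = sum_i f_i^[j] x^[(i+j) mod n]; its coefficient at position m < n is
   f_{(m - j) mod n}^[j]. *)
definition fshift :: "nat \<Rightarrow> nat \<Rightarrow> nat \<Rightarrow> (nat \<Rightarrow> 'a::comm_ring_1) \<Rightarrow> (nat \<Rightarrow> 'a)" where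
  "fshift q n j f = (\<lambda>m. if m < n then (f ((m + (n - j mod n)) mod n)) ^ (q ^ j) else 0)"

definition cshift :: "nat \<Rightarrow> nat \<Rightarrow> nat \<Rightarrow> (nat \<Rightarrow> 'a::comm_ring_1) set \<Rightarrow> (nat \<Rightarrow> 'a) set" where
  "cshift q n j C = fshift q n j ` C"

definition cdim :: "(nat \<Rightarrow> 'a::field) set \<Rightarrow> nat" where
  "cdim C = Vector_Spaces.vector_space.dim scal C"

definition hval :: "nat \<Rightarrow> nat \<Rightarrow> (nat \<Rightarrow> 'a::field) set \<Rightarrow> nat" where
  "hval q n C = Max {cdim (C \<inter> cshift q n j C) | j. 1 \<le> j \<and> j \<le> n - 1 \<and> coprime j n}"

end

theory Submission
  imports Defs "HOL-Library.FuncSet" "HOL-Library.Cardinality" "HOL-Library.Product_Plus"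
    "HOL-Library.Set_Algebras" "HOL-Number_Theory.Residues" "HOL-Computational_Algebra.Polynomial"
begin

(* Since Tr_{q^n/q} is not identically zero, b(f, g) = Tr(f . g) vanishes on an
   F_{q^n}-subspace exactly when the plain dot product f . g = sum f_i g_i does, so for linear
   codes the Delsarte dual is the dot-product dual. The twist f |-> f^[j] rotates the
   coefficients and raises them to the power q^j, a field automorphism; it therefore maps
   f . g to (f . g)^[j] and commutes with taking duals. Dimensions are read off from
   cardinalities (|S| = |F|^(dim S)), which gives dim C^perp = n - dim C and
   dim (A + B) + dim (A \<inter> B) = dim A + dim B. As C^perp \<inter> (C^perp)^[j] = (C + C^[j])^perp,
   its dimension is n - 2k + dim (C \<inter> C^[j]) for every j; taking the maximum over j gives
   h(C^perp) = n - 2k + h(C). *)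

section \<open>Counting subspaces of coefficient sequences\<close>

interpretation vs: vector_space "scal :: 'a::field \<Rightarrow> (nat \<Rightarrow> 'a) \<Rightarrow> (nat \<Rightarrow> 'a)"
  by unfold_locales (auto simp: scal_def fun_eq_iff algebra_simps)

definition supported_in :: "'i set \<Rightarrow> ('i \<Rightarrow> 'a::zero) set" where
  "supported_in J = {f. \<forall>i. i \<notin> J \<longrightarrow> f i = 0}"

lemma Lnq_eq_supported_in: "Lnq n = supported_in {..<n}"
  unfolding Lnq_def supported_in_def by auto

lemma card_supported_in:
  assumes "finite J"
  shows "card (supported_in J :: ('i \<Rightarrow> 'a::{zero,finite}) set) = CARD('a) ^ card J"
proof -
  have "bij_betw (\<lambda>f. restrict f J) (supported_in J :: ('i \<Rightarrow> 'a) set) (J \<rightarrow>\<^sub>E UNIV)"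
    by (rule bij_betw_byWitness[where f'="\<lambda>g i. if i \<in> J then g i else 0"])
       (auto simp: supported_in_def fun_eq_iff PiE_def extensional_def)
  then show ?thesis
    using assms by (simp add: bij_betw_same_card card_PiE)
qed

lemma finite_supported_in:
  "finite J \<Longrightarrow> finite (supported_in J :: ('i \<Rightarrow> 'a::{zero,finite}) set)"
  by (rule card_ge_0_finite) (simp add: card_supported_in)

lemma finite_Lnq: "finite (Lnq n :: (nat \<Rightarrow> 'a::{zero,finite}) set)"
  by (simp add: Lnq_eq_supported_in finite_supported_in)

lemma card_Lnq: "card (Lnq n :: (nat \<Rightarrow> 'a::{zero,finite}) set) = CARD('a) ^ n"
  by (simp add: Lnq_eq_supported_in card_supported_in)

lemma subspace_supported_in: "vs.subspace (supported_in J :: (nat \<Rightarrow> 'a::field) set)"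
  unfolding vs.subspace_def supported_in_def by (auto simp: scal_def)

lemma subspace_Lnq: "vs.subspace (Lnq n :: (nat \<Rightarrow> 'a::field) set)"
  by (simp add: Lnq_eq_supported_in subspace_supported_in)

lemma subspace_set_plus:
  "vs.subspace A \<Longrightarrow> vs.subspace B \<Longrightarrow> vs.subspace (A + B :: (nat \<Rightarrow> 'a::field) set)"
proof -
  have "A + B = {x + y |x y. x \<in> A \<and> y \<in> B}" by (auto simp: set_plus_def)
  then show "vs.subspace A \<Longrightarrow> vs.subspace B \<Longrightarrow> vs.subspace (A + B)"
    by (simp add: vs.subspace_sums)
qed

lemma set_plus_subset_Lnq:
  "A \<subseteq> Lnq n \<Longrightarrow> B \<subseteq> Lnq n \<Longrightarrow> A + B \<subseteq> (Lnq n :: (nat \<Rightarrow> 'a::monoid_add) set)"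
  unfolding set_plus_def Lnq_def by fastforce

lemma card_span_independent:
  fixes B :: "(nat \<Rightarrow> 'a::{field,finite}) set"
  assumes fin: "finite B" and ind: "vs.independent B"
  shows "card (vs.span B) = CARD('a) ^ card B"
proof -
  define comb where "comb u = (\<Sum>v\<in>B. scal (u v) v)" for u
  have span: "vs.span B = comb ` (B \<rightarrow>\<^sub>E UNIV)"
  proof -
    have "vs.span B = range comb" unfolding comb_def by (rule vs.span_finite[OF fin])
    also have "\<dots> = comb ` (B \<rightarrow>\<^sub>E UNIV)"
    proof safe
      fix u show "comb u \<in> comb ` (B \<rightarrow>\<^sub>E UNIV)"
        by (intro image_eqI[where x="restrict u B"]) (auto simp: comb_def intro!: sum.cong)
    qed auto
    finally show ?thesis .
  qed
  have "inj_on comb (B \<rightarrow>\<^sub>E UNIV)"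
  proof (rule inj_onI)
    fix u w assume u: "u \<in> B \<rightarrow>\<^sub>E UNIV" and w: "w \<in> B \<rightarrow>\<^sub>E UNIV" and eq: "comb u = comb w"
    have "(\<Sum>v\<in>B. scal (u v - w v) v) = comb u - comb w"
      unfolding comb_def sum_subtractf[symmetric]
      by (intro sum.cong) (auto simp: scal_def fun_eq_iff algebra_simps)
    with eq have "(\<Sum>v\<in>B. scal (u v - w v) v) = 0" by simp
    moreover from ind have "(\<forall>v\<in>B. c v = 0) \<or> (\<Sum>v\<in>B. scal (c v) v) \<noteq> 0" for c
      by (simp add: vs.dependent_finite[OF fin])
    ultimately have "\<forall>v\<in>B. u v - w v = 0" by metis
    then show "u = w" using u w by (auto simp: PiE_def extensional_def fun_eq_iff)
  qed
  then show ?thesis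
    using span fin by (simp add: card_image card_PiE)
qed

lemma card_subspace:
  fixes S :: "(nat \<Rightarrow> 'a::{field,finite}) set"
  assumes "vs.subspace S" and "finite S"
  shows "card S = CARD('a) ^ vs.dim S"
proof -
  obtain B where B: "B \<subseteq> S" "vs.independent B" "S \<subseteq> vs.span B" "card B = vs.dim S"
    by (rule vs.basis_exists)
  then have "vs.span B = S" using assms(1) by (intro vs.span_subspace) auto
  with B assms(2) show ?thesis
    using card_span_independent[of B] finite_subset by metis
qed

lemma power_card_field_inject:
  "CARD('a::{field,finite}) ^ a = CARD('a) ^ b \<longleftrightarrow> a = b"
proof -
  have "card {0, 1::'a} \<le> CARD('a)" by (intro card_mono) simp_all
  then show ?thesis by (intro power_inject_exp) simp
qed

lemma card_eq_card_image_mult_card_kernel: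
  fixes h :: "'b::ab_group_add \<Rightarrow> 'c::ab_group_add"
  assumes "finite G"
    and add: "\<And>x y. x \<in> G \<Longrightarrow> y \<in> G \<Longrightarrow> x + y \<in> G"
    and diff: "\<And>x y. x \<in> G \<Longrightarrow> y \<in> G \<Longrightarrow> x - y \<in> G"
    and hom: "\<And>x y. x \<in> G \<Longrightarrow> y \<in> G \<Longrightarrow> h (x + y) = h x + h y"
  shows "card G = card (h ` G) * card {x \<in> G. h x = 0}"
proof -
  let ?K = "{x \<in> G. h x = 0}"
  have fiber: "{x \<in> G. h x = h x0} = (+) x0 ` ?K" if "x0 \<in> G" for x0
  proof (intro Set.set_eqI iffI)
    fix x assume "x \<in> {x \<in> G. h x = h x0}"
    moreover have "h x = h (x - x0) + h x0" if "x \<in> G"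
      using hom[of "x - x0" x0] diff[OF that \<open>x0 \<in> G\<close>] \<open>x0 \<in> G\<close> by simp
    ultimately show "x \<in> (+) x0 ` ?K"
      using diff[of _ x0] \<open>x0 \<in> G\<close> by (intro image_eqI[where x="x - x0"]) auto
  qed (use add hom that in auto)
  have "card G = card (\<Union>y\<in>h ` G. {x \<in> G. h x = y})"
    by (rule arg_cong[where f=card]) auto
  also have "\<dots> = (\<Sum>y\<in>h ` G. card {x \<in> G. h x = y})"
    using \<open>finite G\<close> by (intro card_UN_disjoint) auto
  also have "\<dots> = (\<Sum>y\<in>h ` G. card ?K)"
    using fiber by (intro sum.cong) (auto simp: card_image)
  finally show ?thesis by simp
qed

lemma card_set_plus_mult_card_Int:
  fixes A B :: "(nat \<Rightarrow> 'a::field) set"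
  assumes "vs.subspace A" "vs.subspace B" "finite A" "finite B"
  shows "card (A + B) * card (A \<inter> B) = card A * card B"
proof -
  let ?h = "\<lambda>(a, b). a + b"
  have "{x \<in> A \<times> B. ?h x = 0} = (\<lambda>t. (t, - t)) ` (A \<inter> B)"
  proof (intro Set.set_eqI iffI)
    fix x assume "x \<in> {x \<in> A \<times> B. ?h x = 0}"
    then obtain a b where "x = (a, b)" "a \<in> A" "b \<in> B" "b = - a"
      by (auto simp: add_eq_0_iff)
    then show "x \<in> (\<lambda>t. (t, - t)) ` (A \<inter> B)"
      using assms(2) vs.subspace_neg[of B b] by auto
  next
    fix x assume "x \<in> (\<lambda>t. (t, - t)) ` (A \<inter> B)"
    then obtain t where "x = (t, - t)" "t \<in> A" "t \<in> B" by blast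
    then show "x \<in> {x \<in> A \<times> B. ?h x = 0}"
      using assms(2) vs.subspace_neg[of B t] by simp
  qed
  then have "card {x \<in> A \<times> B. ?h x = 0} = card (A \<inter> B)"
    by (simp add: card_image inj_on_def)
  moreover have "?h ` (A \<times> B) = A + B"
    by (force simp: set_plus_def)
  moreover have "card (A \<times> B) = card (?h ` (A \<times> B)) * card {x \<in> A \<times> B. ?h x = 0}"
    using assms by (intro card_eq_card_image_mult_card_kernel)
      (auto simp: vs.subspace_add vs.subspace_diff)
  ultimately show ?thesis by (simp add: card_cartesian_product)
qed

lemma dim_set_plus_add_dim_Int:
  fixes A B :: "(nat \<Rightarrow> 'a::{field,finite}) set"
  assumes "vs.subspace A" "vs.subspace B" "finite A" "finite B"
  shows "vs.dim (A + B) + vs.dim (A \<inter> B) = vs.dim A + vs.dim B"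
proof -
  have "finite (A + B)" using assms(3,4) by (simp add: set_plus_def finite_image_set2)
  then have "CARD('a) ^ (vs.dim (A + B) + vs.dim (A \<inter> B)) = CARD('a) ^ (vs.dim A + vs.dim B)"
    using card_set_plus_mult_card_Int[OF assms] assms
    by (simp add: power_add card_subspace subspace_set_plus vs.subspace_inter)
  then show ?thesis by (simp only: power_card_field_inject)
qed

section \<open>The dual for the coefficient dot product\<close>

definition coeff_dot :: "nat \<Rightarrow> (nat \<Rightarrow> 'a::comm_ring_1) \<Rightarrow> (nat \<Rightarrow> 'a) \<Rightarrow> 'a" where
  "coeff_dot n f g = (\<Sum>i<n. f i * g i)"

definition dot_dual :: "nat \<Rightarrow> (nat \<Rightarrow> 'a::comm_ring_1) set \<Rightarrow> (nat \<Rightarrow> 'a) set" where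
  "dot_dual n S = {f \<in> Lnq n. \<forall>g\<in>S. coeff_dot n f g = 0}"

lemma coeff_dot_add_left: "coeff_dot n (f + f') g = coeff_dot n f g + coeff_dot n f' g"
  unfolding coeff_dot_def by (simp add: algebra_simps sum.distrib)

lemma coeff_dot_add_right: "coeff_dot n f (g + g') = coeff_dot n f g + coeff_dot n f g'"
  unfolding coeff_dot_def by (simp add: algebra_simps sum.distrib)

lemma coeff_dot_scal_left: "coeff_dot n (scal c f) g = c * coeff_dot n f g"
  unfolding coeff_dot_def scal_def by (simp add: sum_distrib_left algebra_simps)

lemma coeff_dot_scal_right: "coeff_dot n f (scal c g) = c * coeff_dot n f g"
  unfolding coeff_dot_def scal_def by (simp add: sum_distrib_left algebra_simps)

lemma coeff_dot_eq_0_on_span: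
  assumes "\<forall>b\<in>B. coeff_dot n f b = (0::'a::field)" and "g \<in> vs.span B"
  shows "coeff_dot n f g = 0"
proof -
  have "vs.subspace {g. coeff_dot n f g = 0}"
    unfolding vs.subspace_def
    by (simp add: coeff_dot_add_right coeff_dot_scal_right) (simp add: coeff_dot_def)
  then have "vs.span B \<subseteq> {g. coeff_dot n f g = 0}"
    using assms(1) by (intro vs.span_minimal) auto
  then show ?thesis using assms(2) by auto
qed

lemma subspace_dot_dual: "vs.subspace (dot_dual n S :: (nat \<Rightarrow> 'a::field) set)"
  using subspace_Lnq[of n, unfolded vs.subspace_def]
  unfolding vs.subspace_def dot_dual_def
  by (auto simp: coeff_dot_add_left coeff_dot_scal_left) (simp add: coeff_dot_def)

lemma finite_dot_dual: "finite (dot_dual n S :: (nat \<Rightarrow> 'a::{comm_ring_1,finite}) set)"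
  using finite_Lnq by (rule finite_subset[rotated]) (auto simp: dot_dual_def)

lemma dot_dual_set_plus:
  assumes "0 \<in> A" and "0 \<in> B"
  shows "dot_dual n (A + B) = dot_dual n A \<inter> dot_dual n (B :: (nat \<Rightarrow> 'a::comm_ring_1) set)"
proof -
  have "A \<subseteq> A + B" and "B \<subseteq> A + B"
    using set_zero_plus2[OF assms(2), of A] set_zero_plus2[OF assms(1), of B]
    by (simp_all add: add.commute)
  then have "dot_dual n (A + B) \<subseteq> dot_dual n A \<inter> dot_dual n B"
    unfolding dot_dual_def by blast
  moreover have "dot_dual n A \<inter> dot_dual n B \<subseteq> dot_dual n (A + B)"
    unfolding dot_dual_def set_plus_def by (auto simp: coeff_dot_add_right)
  ultimately show ?thesis by (rule equalityI)
qed

lemma card_Lnq_le_card_dot_dual_mult_card: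
  fixes S :: "(nat \<Rightarrow> 'a::{field,finite}) set"
  assumes S: "vs.subspace S" "S \<subseteq> Lnq n"
  shows "CARD('a) ^ n \<le> card (dot_dual n S) * card S"
proof -
  obtain B where B: "B \<subseteq> S" "vs.independent B" "S \<subseteq> vs.span B" "card B = vs.dim S"
    by (rule vs.basis_exists)
  have "finite S" using S(2) finite_Lnq by (rule finite_subset)
  then have "finite B" using B(1) by (rule finite_subset[rotated])
  have span_B: "vs.span B = S"
    using B S(1) by (intro vs.span_subspace) auto
  define h where "h f = (\<lambda>b. if b \<in> B then coeff_dot n f b else 0)" for f :: "nat \<Rightarrow> 'a"
  have "h f = 0 \<longleftrightarrow> (\<forall>g\<in>S. coeff_dot n f g = 0)" for f
  proof
    assume "h f = 0"
    then have "\<forall>b\<in>B. coeff_dot n f b = 0" by (metis h_def zero_fun_def)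
    then show "\<forall>g\<in>S. coeff_dot n f g = 0" using span_B coeff_dot_eq_0_on_span by blast
  qed (use B(1) in \<open>auto simp: h_def fun_eq_iff\<close>)
  then have kernel: "{f \<in> Lnq n. h f = 0} = dot_dual n S"
    unfolding dot_dual_def by blast
  have "card (Lnq n :: (nat \<Rightarrow> 'a) set) = card (h ` Lnq n) * card {f \<in> Lnq n. h f = 0}"
    by (intro card_eq_card_image_mult_card_kernel finite_Lnq
        vs.subspace_add[OF subspace_Lnq] vs.subspace_diff[OF subspace_Lnq])
      (auto simp: h_def fun_eq_iff coeff_dot_add_left)
  moreover have "card (h ` Lnq n) \<le> card S"
  proof -
    have "card (h ` Lnq n) \<le> card (supported_in B :: ((nat \<Rightarrow> 'a) \<Rightarrow> 'a) set)"
      using \<open>finite B\<close> by (intro card_mono finite_supported_in) (auto simp: h_def supported_in_def)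
    also have "\<dots> = card S"
      using \<open>finite B\<close> \<open>finite S\<close> B(4) S(1) by (simp add: card_supported_in card_subspace)
    finally show ?thesis .
  qed
  ultimately show ?thesis
    by (simp add: kernel card_Lnq mult.commute)
qed

lemma sum_apply: "(\<Sum>i\<in>A. f i) x = (\<Sum>i\<in>A. f i x)"
  by (induction A rule: infinite_finite_induct) auto

lemma Lnq_eq_sum_unit:
  assumes "f \<in> Lnq n"
  shows "f = (\<Sum>i<n. scal (f i) (0(i := 1)) :: nat \<Rightarrow> 'a::field)"
proof
  fix j
  show "f j = (\<Sum>i<n. scal (f i) (0(i := 1))) j"
    using assms
    by (cases "j < n")
      (simp_all add: sum_apply scal_def Lnq_def if_distrib[of "\<lambda>x. _ * x"] sum.If_cases)
qed

text \<open>A maximal set of coordinates on which \<open>S\<close> has no nonzero vector; its complement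
  is an information set of \<open>S\<close>.\<close>

lemma obtain_supported_in_complement:
  fixes S :: "(nat \<Rightarrow> 'a::field) set"
  assumes S: "vs.subspace S" "S \<subseteq> Lnq n"
  obtains J where "J \<subseteq> {..<n}" "S \<inter> supported_in J = {0}" "S + supported_in J = Lnq n"
proof -
  define P where "P = {J. J \<subseteq> {..<n} \<and> S \<inter> supported_in J = {0}}"
  have "finite P" unfolding P_def by (rule finite_subset[of _ "Pow {..<n}"]) auto
  moreover have "{} \<in> P"
    using vs.subspace_0[OF S(1)] unfolding P_def supported_in_def by auto
  ultimately obtain J where "J \<in> P" and "\<forall>J'\<in>P. J \<subseteq> J' \<longrightarrow> J' = J"
    using finite_has_maximal[of P] by blast
  then have maximal: "\<And>J'. J' \<in> P \<Longrightarrow> J \<subseteq> J' \<Longrightarrow> J' = J" by blast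
  have J: "J \<subseteq> {..<n}" "S \<inter> supported_in J = {0}" using \<open>J \<in> P\<close> unfolding P_def by auto
  have unit: "0(i := 1) \<in> S + supported_in J" if "i < n" for i
  proof (cases "i \<in> J")
    case True
    then have "0(i := 1) \<in> supported_in J" by (auto simp: supported_in_def)
    then show ?thesis using set_zero_plus2[OF vs.subspace_0[OF S(1)]] by blast
  next
    case False
    with maximal[of "insert i J"] J that have "S \<inter> supported_in (insert i J) \<noteq> {0}"
      unfolding P_def by auto
    moreover have "0 \<in> S \<inter> supported_in (insert i J)"
      using vs.subspace_0[OF S(1)] by (auto simp: supported_in_def)
    ultimately obtain s where s: "s \<in> S" "s \<in> supported_in (insert i J)" "s \<noteq> 0"
      by blast
    have "s i \<noteq> 0"
    proof
      assume "s i = 0"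
      then have "s \<in> supported_in J" using s(2) by (auto simp: supported_in_def)
      with s J(2) show False by blast
    qed
    define v where "v = s - scal (s i) (0(i := 1))"
    have "v \<in> supported_in J"
      using s(2) by (auto simp: v_def supported_in_def scal_def)
    moreover have "0(i := 1) = scal (1 / s i) s + scal (- (1 / s i)) v"
      using \<open>s i \<noteq> 0\<close> by (auto simp: v_def scal_def fun_eq_iff)
    ultimately show ?thesis
      using s(1) vs.subspace_scale[OF S(1)] vs.subspace_scale[OF subspace_supported_in]
      by (metis set_plus_intro)
  qed
  have "Lnq n \<subseteq> S + supported_in J"
  proof
    fix f :: "nat \<Rightarrow> 'a" assume "f \<in> Lnq n"
    moreover have "(\<Sum>i<n. scal (f i) (0(i := 1))) \<in> S + supported_in J"
      using unit subspace_set_plus[OF S(1) subspace_supported_in]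
      by (intro vs.subspace_sum) (auto intro: vs.subspace_scale)
    ultimately show "f \<in> S + supported_in J" by (simp flip: Lnq_eq_sum_unit)
  qed
  moreover have "supported_in J \<subseteq> Lnq n"
    using J(1) by (auto simp: Lnq_def supported_in_def)
  ultimately have "S + supported_in J = Lnq n"
    using set_plus_subset_Lnq[OF S(2)] by blast
  with J that show ?thesis by blast
qed

lemma card_dot_dual_mult_card_le_card_Lnq:
  fixes S :: "(nat \<Rightarrow> 'a::{field,finite}) set"
  assumes S: "vs.subspace S" "S \<subseteq> Lnq n"
  shows "card (dot_dual n S) * card S \<le> CARD('a) ^ n"
proof -
  obtain J where J: "J \<subseteq> {..<n}" "S \<inter> supported_in J = {0}" "S + supported_in J = Lnq n"
    using obtain_supported_in_complement[OF S] .
  define K where "K = {..<n} - J"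
  have "finite J" using J(1) by (rule finite_subset) simp
  have "finite S" using S(2) finite_Lnq by (rule finite_subset)
  have K_subset: "supported_in K \<subseteq> (Lnq n :: (nat \<Rightarrow> 'a) set)"
    by (auto simp: K_def Lnq_def supported_in_def)
  have "card S * CARD('a) ^ card J = CARD('a) ^ n"
    using card_set_plus_mult_card_Int[OF S(1) subspace_supported_in \<open>finite S\<close>
        finite_supported_in[OF \<open>finite J\<close>]] J(2,3)
    by (simp add: card_Lnq card_supported_in \<open>finite J\<close>)
  moreover have "card (supported_in K :: (nat \<Rightarrow> 'a) set) * CARD('a) ^ card J = CARD('a) ^ n"
    using J(1) card_mono[OF _ J(1)]
    by (simp add: K_def card_supported_in card_Diff_subset \<open>finite J\<close> flip: power_add)
  moreover have "CARD('a) ^ card J \<noteq> 0" by simp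
  ultimately have card_K: "card (supported_in K :: (nat \<Rightarrow> 'a) set) = card S"
    by (metis mult_right_cancel)
  \<comment> \<open>pairing \<open>f\<close> with the element of \<open>S\<close> that agrees with the unit vector at \<open>i\<close>
    outside \<open>J\<close> picks out the coefficient \<open>f i\<close>\<close>
  have "f = 0" if f: "f \<in> dot_dual n S" "f \<in> supported_in K" for f
  proof
    fix i
    show "f i = 0 i"
    proof (cases "i \<in> K")
      case True
      then have "0(i := 1) \<in> S + supported_in J" using J(3) by (auto simp: K_def Lnq_def)
      then obtain s v where sv: "s \<in> S" "v \<in> supported_in J" "0(i := 1) = s + v"
        by (auto simp: set_plus_def)
      have "f j * s j = (if j = i then f i else 0)" if "j < n" for j
      proof (cases "j \<in> K")
        case True
        then have "v j = 0" using sv(2) by (simp add: K_def supported_in_def)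
        with sv(3) have "s j = (0(i := 1)) j" by (simp add: fun_eq_iff)
        then show ?thesis by simp
      next
        case False
        then show ?thesis using f(2) \<open>i \<in> K\<close> by (auto simp: supported_in_def)
      qed
      then have "coeff_dot n f s = f i"
        using \<open>i \<in> K\<close> by (simp add: coeff_dot_def K_def)
      moreover have "coeff_dot n f s = 0" using f(1) sv(1) by (simp add: dot_dual_def)
      ultimately show ?thesis by simp
    next
      case False
      then show ?thesis using f(2) by (simp add: supported_in_def)
    qed
  qed
  then have "dot_dual n S \<inter> supported_in K = {0}"
    using vs.subspace_0[OF subspace_dot_dual] vs.subspace_0[OF subspace_supported_in] by blast
  then have "card (dot_dual n S) * card S = card (dot_dual n S + supported_in K)"
    using card_set_plus_mult_card_Int[OF subspace_dot_dual[of n S] subspace_supported_in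
        finite_dot_dual finite_subset[OF K_subset finite_Lnq]] card_K
    by simp
  also have "\<dots> \<le> card (Lnq n :: (nat \<Rightarrow> 'a) set)"
    using K_subset by (intro card_mono finite_Lnq set_plus_subset_Lnq) (auto simp: dot_dual_def)
  finally show ?thesis by (simp add: card_Lnq)
qed

lemma dim_dot_dual_add_dim:
  fixes S :: "(nat \<Rightarrow> 'a::{field,finite}) set"
  assumes "vs.subspace S" and "S \<subseteq> Lnq n"
  shows "vs.dim (dot_dual n S) + vs.dim S = n"
proof -
  have "finite S" using assms(2) finite_Lnq by (rule finite_subset)
  have "card (dot_dual n S) * card S = CARD('a) ^ n"
    using card_dot_dual_mult_card_le_card_Lnq[OF assms] card_Lnq_le_card_dot_dual_mult_card[OF assms]
    by (rule antisym)
  then have "CARD('a) ^ (vs.dim (dot_dual n S) + vs.dim S) = CARD('a) ^ n"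
    using assms(1) \<open>finite S\<close>
    by (simp add: power_add card_subspace subspace_dot_dual finite_dot_dual)
  then show ?thesis by (simp only: power_card_field_inject)
qed

section \<open>Frobenius powers and the trace\<close>

lemma prime_CHAR_finite: "prime CHAR('a::{idom,finite})"
  by (rule prime_CHAR_semidom[OF finite_imp_CHAR_pos]) simp

lemma CHAR_eq_if_card_eq_prime_power:
  assumes "prime p" and "CARD('a::{field,finite}) = p ^ e"
  shows "CHAR('a) = p"
proof -
  have "CHAR('a) dvd p ^ e" using CHAR_dvd_CARD[where 'a='a] assms(2) by simp
  then have "CHAR('a) dvd p" using prime_CHAR_finite by (rule prime_dvd_power[rotated])
  with prime_CHAR_finite assms(1) show ?thesis by (rule primes_dvd_imp_eq)
qed

lemma power_CHAR_power_inject: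
  fixes x y :: "'a::{idom,finite}"
  assumes "e = CHAR('a) ^ k"
  shows "x ^ e = y ^ e \<longleftrightarrow> x = y"
proof
  assume "x ^ e = y ^ e"
  moreover have "x ^ e = (x - y) ^ e + y ^ e"
    using freshmans_dream'[OF prime_CHAR_finite assms, of "x - y" y] by simp
  ultimately have "(x - y) ^ e = 0" by simp
  then show "x = y" by simp
qed simp

lemma surj_power_CHAR_power:
  "e = CHAR('a::{idom,finite}) ^ k \<Longrightarrow> surj (\<lambda>x :: 'a. x ^ e)"
  by (rule finite_UNIV_inj_surj) (auto intro: injI simp: power_CHAR_power_inject)

lemma power_eq_CHAR_power_mult: "q = CHAR('a::{idom,finite}) ^ m \<Longrightarrow> q ^ j = CHAR('a) ^ (m * j)"
  by (simp add: power_mult)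

lemma CHAR_power_pos: "q = CHAR('a::{idom,finite}) ^ m \<Longrightarrow> 0 < q"
  using prime_gt_0_nat[OF prime_CHAR_finite[where 'a='a]] by simp

lemma trace_zero: "0 < q \<Longrightarrow> trace q n 0 = 0"
  by (simp add: trace_def power_0_left)

text \<open>The trace is a polynomial function of degree \<open>q\<^sup>n\<^sup>-\<^sup>1 < CARD('a)\<close>.\<close>

lemma obtain_trace_nonzero:
  fixes q n :: nat
  assumes "1 < q" and "0 < n" and "CARD('a) = q ^ n"
  obtains y :: "'a::{idom,finite}" where "trace q n y \<noteq> 0"
proof -
  define P :: "'a poly" where "P = (\<Sum>i<n. monom 1 (q ^ i))"
  have coeff_P: "coeff P k = (\<Sum>i<n. if q ^ i = k then 1 else 0)" for k
    by (simp add: P_def coeff_sum coeff_monom)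
  have "coeff P (q ^ (n - 1)) = (\<Sum>i<n. if i = n - 1 then 1 else 0)"
    unfolding coeff_P using assms(1) by (intro sum.cong) auto
  then have "P \<noteq> 0" using assms(2) by auto
  have "degree P \<le> q ^ (n - 1)"
  proof (rule degree_le, intro allI impI)
    fix k assume "q ^ (n - 1) < k"
    moreover have "q ^ i \<le> q ^ (n - 1)" if "i < n" for i
      using that assms(1) by (intro power_increasing) auto
    ultimately show "coeff P k = 0" unfolding coeff_P by (intro sum.neutral) fastforce
  qed
  moreover have "q ^ (n - 1) < q ^ n"
    using assms(1,2) by (intro power_strict_increasing) auto
  ultimately have "card {y. poly P y = 0} < CARD('a)"
    using card_poly_roots_bound[OF \<open>P \<noteq> 0\<close>] assms(3) by linarith
  then have "{y. poly P y = 0} \<noteq> UNIV" by auto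
  then obtain y where "poly P y \<noteq> 0" by auto
  moreover have "poly P y = trace q n y"
    by (simp add: P_def trace_def poly_sum poly_monom)
  ultimately show ?thesis using that by simp
qed

lemma ddual_eq_dot_dual:
  fixes S :: "(nat \<Rightarrow> 'a::{field,finite}) set"
  assumes "1 < q" and "0 < n" and "CARD('a) = q ^ n" and "vs.subspace S"
  shows "ddual q n S = dot_dual n S"
proof -
  obtain y :: 'a where y: "trace q n y \<noteq> 0"
    using obtain_trace_nonzero[OF assms(1-3)] .
  have "(\<forall>g\<in>S. trace q n (coeff_dot n f g) = 0) \<longleftrightarrow> (\<forall>g\<in>S. coeff_dot n f g = 0)" for f
  proof
    assume trace_0: "\<forall>g\<in>S. trace q n (coeff_dot n f g) = 0"
    show "\<forall>g\<in>S. coeff_dot n f g = 0"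
    proof (rule ccontr)
      assume "\<not> (\<forall>g\<in>S. coeff_dot n f g = 0)"
      then obtain g where g: "g \<in> S" "coeff_dot n f g \<noteq> 0" by blast
      then have "scal (y / coeff_dot n f g) g \<in> S" using vs.subspace_scale[OF assms(4)] by blast
      with trace_0 have "trace q n (coeff_dot n f (scal (y / coeff_dot n f g) g)) = 0" by blast
      with g(2) y show False by (simp add: coeff_dot_scal_right)
    qed
  qed (use assms(1) in \<open>simp add: trace_zero\<close>)
  then show ?thesis
    unfolding ddual_def dot_dual_def bform_def coeff_dot_def by blast
qed

section \<open>Twisting by a power of Frobenius\<close>

lemma bij_betw_add_mod: "bij_betw (\<lambda>i. (i + c) mod n) {..<n} {..<n :: nat}"
proof (cases "n = 0")
  case False
  have "inj_on (\<lambda>i. (i + c) mod n) {..<n}"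
  proof (rule inj_onI)
    fix a b assume "a \<in> {..<n}" "b \<in> {..<n}" "(a + c) mod n = (b + c) mod n"
    then show "a = b"
      by (metis cong_add_rcancel_nat cong_def cong_less_modulus_unique_nat lessThan_iff)
  qed
  moreover have "(\<lambda>i. (i + c) mod n) ` {..<n} \<subseteq> {..<n}" using False by auto
  ultimately show ?thesis by (simp add: bij_betw_def endo_inj_surj)
qed (simp add: bij_betw_def)

lemma fshift_in_Lnq: "fshift q n j f \<in> Lnq n"
  by (simp add: fshift_def Lnq_def)

lemma fshift_add:
  fixes f g :: "nat \<Rightarrow> 'a::{field,finite}"
  assumes "q = CHAR('a) ^ m"
  shows "fshift q n j (f + g) = fshift q n j f + fshift q n j g"
  using freshmans_dream'[OF prime_CHAR_finite power_eq_CHAR_power_mult[OF assms]]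
  by (simp add: fshift_def fun_eq_iff)

lemma fshift_scal: "fshift q n j (scal c f) = scal (c ^ q ^ j) (fshift q n j f)"
  by (simp add: fshift_def scal_def fun_eq_iff power_mult_distrib)

lemma coeff_dot_fshift:
  fixes f g :: "nat \<Rightarrow> 'a::{field,finite}"
  assumes "q = CHAR('a) ^ m"
  shows "coeff_dot n (fshift q n j f) (fshift q n j g) = coeff_dot n f g ^ q ^ j"
proof -
  define \<sigma> where "\<sigma> i = (i + (n - j mod n)) mod n" for i
  have "coeff_dot n (fshift q n j f) (fshift q n j g) = (\<Sum>i<n. (f (\<sigma> i) * g (\<sigma> i)) ^ q ^ j)"
    by (simp add: coeff_dot_def fshift_def \<sigma>_def power_mult_distrib)
  also have "\<dots> = (\<Sum>i<n. (f i * g i) ^ q ^ j)"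
    unfolding \<sigma>_def by (rule sum.reindex_bij_betw[OF bij_betw_add_mod])
  also have "\<dots> = coeff_dot n f g ^ q ^ j"
    unfolding coeff_dot_def
    by (rule freshmans_dream_sum'[OF prime_CHAR_finite power_eq_CHAR_power_mult[OF assms], symmetric])
  finally show ?thesis .
qed

lemma inj_on_fshift:
  assumes "q = CHAR('a::{field,finite}) ^ m"
  shows "inj_on (fshift q n j :: (nat \<Rightarrow> 'a) \<Rightarrow> _) (Lnq n)"
proof (rule inj_onI)
  fix f g :: "nat \<Rightarrow> 'a"
  assume f: "f \<in> Lnq n" and g: "g \<in> Lnq n" and eq: "fshift q n j f = fshift q n j g"
  have "f k = g k" if "k < n" for k
  proof -
    have "k \<in> (\<lambda>i. (i + (n - j mod n)) mod n) ` {..<n}"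
      unfolding bij_betw_imp_surj_on[OF bij_betw_add_mod] using \<open>k < n\<close> by simp
    then obtain i where "i < n" "(i + (n - j mod n)) mod n = k" by blast
    then have "f k ^ q ^ j = g k ^ q ^ j"
      using fun_cong[OF eq, of i] by (simp add: fshift_def)
    then show ?thesis
      using power_CHAR_power_inject[OF power_eq_CHAR_power_mult[OF assms]] by simp
  qed
  moreover have "f k = g k" if "\<not> k < n" for k
    using f g that by (simp add: Lnq_def)
  ultimately show "f = g" by (meson ext)
qed

lemma fshift_image_Lnq:
  assumes "q = CHAR('a::{field,finite}) ^ m"
  shows "fshift q n j ` Lnq n = (Lnq n :: (nat \<Rightarrow> 'a) set)"
  using finite_Lnq fshift_in_Lnq inj_on_fshift[OF assms] by (intro endo_inj_surj) auto

lemma cshift_subset_Lnq: "cshift q n j C \<subseteq> Lnq n"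
  by (auto simp: cshift_def fshift_in_Lnq)

lemma subspace_cshift:
  fixes C :: "(nat \<Rightarrow> 'a::{field,finite}) set"
  assumes q: "q = CHAR('a) ^ m" and C: "vs.subspace C"
  shows "vs.subspace (cshift q n j C)"
  unfolding vs.subspace_def cshift_def
proof (intro conjI ballI allI)
  have "fshift q n j 0 = (0 :: nat \<Rightarrow> 'a)"
    using CHAR_power_pos[OF q] by (simp add: fshift_def fun_eq_iff power_0_left)
  then show "0 \<in> fshift q n j ` C" using vs.subspace_0[OF C] by force
next
  fix x y assume "x \<in> fshift q n j ` C" "y \<in> fshift q n j ` C"
  then obtain f g where "f \<in> C" "g \<in> C" "x = fshift q n j f" "y = fshift q n j g" by blast
  moreover from this have "f + g \<in> C" using vs.subspace_add[OF C] by blast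
  ultimately show "x + y \<in> fshift q n j ` C"
    by (metis fshift_add[OF q] image_eqI)
next
  fix c :: 'a and x assume "x \<in> fshift q n j ` C"
  then obtain f where f: "f \<in> C" "x = fshift q n j f" by blast
  obtain z where "c = z ^ q ^ j"
    using surjD[OF surj_power_CHAR_power[OF power_eq_CHAR_power_mult[OF q]]] by blast
  with f have "scal c x = fshift q n j (scal z f)" by (simp add: fshift_scal)
  then show "scal c x \<in> fshift q n j ` C" using vs.subspace_scale[OF C f(1)] by blast
qed

lemma dim_cshift:
  fixes C :: "(nat \<Rightarrow> 'a::{field,finite}) set"
  assumes q: "q = CHAR('a) ^ m" and C: "vs.subspace C" "C \<subseteq> Lnq n"
  shows "vs.dim (cshift q n j C) = vs.dim C"
proof -
  have "card (cshift q n j C) = card C"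
    unfolding cshift_def using inj_on_subset[OF inj_on_fshift[OF q] C(2)] by (rule card_image)
  moreover have "card (cshift q n j C) = CARD('a) ^ vs.dim (cshift q n j C)"
    using subspace_cshift[OF q C(1)] finite_subset[OF cshift_subset_Lnq finite_Lnq]
    by (rule card_subspace)
  moreover have "card C = CARD('a) ^ vs.dim C"
    using C(1) finite_subset[OF C(2) finite_Lnq] by (rule card_subspace)
  ultimately have "CARD('a) ^ vs.dim (cshift q n j C) = CARD('a) ^ vs.dim C"
    by simp
  then show ?thesis by (simp only: power_card_field_inject)
qed

lemma dot_dual_cshift:
  fixes C :: "(nat \<Rightarrow> 'a::{field,finite}) set"
  assumes q: "q = CHAR('a) ^ m"
  shows "dot_dual n (cshift q n j C) = cshift q n j (dot_dual n C)"
proof -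
  have "0 < q ^ j" using CHAR_power_pos[OF q] by simp
  show ?thesis
  proof (intro Set.set_eqI iffI)
    fix h assume h: "h \<in> dot_dual n (cshift q n j C)"
    then have "h \<in> fshift q n j ` Lnq n"
      unfolding fshift_image_Lnq[OF q] by (simp add: dot_dual_def)
    then obtain f where f: "f \<in> Lnq n" "h = fshift q n j f" by blast
    have "coeff_dot n f g = 0" if "g \<in> C" for g
      using h f \<open>0 < q ^ j\<close> that
      by (auto simp: dot_dual_def cshift_def coeff_dot_fshift[OF q])
    with f show "h \<in> cshift q n j (dot_dual n C)"
      by (auto simp: dot_dual_def cshift_def)
  next
    fix h assume "h \<in> cshift q n j (dot_dual n C)"
    then show "h \<in> dot_dual n (cshift q n j C)"
      using \<open>0 < q ^ j\<close>
      by (auto simp: dot_dual_def cshift_def coeff_dot_fshift[OF q] fshift_in_Lnq power_0_left)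
  qed
qed

lemma dim_dot_dual_Int_cshift:
  fixes C :: "(nat \<Rightarrow> 'a::{field,finite}) set"
  assumes q: "q = CHAR('a) ^ m" and C: "vs.subspace C" "C \<subseteq> Lnq n"
  shows "vs.dim (dot_dual n C \<inter> cshift q n j (dot_dual n C)) + 2 * vs.dim C
    = n + vs.dim (C \<inter> cshift q n j C)"
proof -
  let ?Cj = "cshift q n j C"
  have Cj: "vs.subspace ?Cj" "?Cj \<subseteq> Lnq n"
    using subspace_cshift[OF q C(1)] cshift_subset_Lnq .
  have "dot_dual n C \<inter> cshift q n j (dot_dual n C) = dot_dual n (C + ?Cj)"
    using vs.subspace_0[OF C(1)] vs.subspace_0[OF Cj(1)]
    by (simp add: dot_dual_cshift[OF q] dot_dual_set_plus)
  moreover have "vs.dim (dot_dual n (C + ?Cj)) + vs.dim (C + ?Cj) = n"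
    using subspace_set_plus[OF C(1) Cj(1)] set_plus_subset_Lnq[OF C(2) Cj(2)]
    by (rule dim_dot_dual_add_dim)
  moreover have "vs.dim (C + ?Cj) + vs.dim (C \<inter> ?Cj) = vs.dim C + vs.dim ?Cj"
    using C Cj finite_subset[OF _ finite_Lnq]
    by (intro dim_set_plus_add_dim_Int) auto
  ultimately show ?thesis
    using dim_cshift[OF q C] by simp
qed

lemma int_Max_image_shift:
  assumes "finite R" and "R \<noteq> {}" and "\<And>j. j \<in> R \<Longrightarrow> int (g' j) = int (g j) + c"
  shows "int (Max (g' ` R)) = int (Max (g ` R)) + c"
proof -
  have "int (Max (g' ` R)) = Max ((\<lambda>j. int (g j) + c) ` R)"
    using assms by (simp add: mono_Max_commute[of int] mono_def image_image cong: image_cong)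
  also have "\<dots> = int (Max (g ` R)) + c"
    using assms by (simp add: Max_add_commute mono_Max_commute[of int] mono_def image_image)
  finally show ?thesis .
qed

theorem proposition4p1:
  fixes C :: "(nat \<Rightarrow> 'a::{field,finite}) set" and p m q n k :: nat
  assumes "prime p" and "0 < m" and "q = p ^ m"
    and "2 \<le> n"
    and "card (UNIV :: 'a set) = q ^ n"
    and "C \<subseteq> Lnq n"
    and "Modules.module.subspace scal C"
    and "cdim C = k"
  shows "(\<forall>i<n. ddual q n (cshift q n i C) = cshift q n i (ddual q n C))
         \<and> int (hval q n (ddual q n C)) = int n - 2 * int k + int (hval q n C)"
proof -
  have "CHAR('a) = p"
    using CHAR_eq_if_card_eq_prime_power[of p "m * n"] assms(1,3,5) by (simp add: power_mult)
  then have q: "q = CHAR('a) ^ m" using assms(3) by simp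
  have "1 < q" using assms(1-3) prime_gt_1_nat one_less_power by blast
  have dual: "ddual q n S = dot_dual n S" if "vs.subspace S" for S :: "(nat \<Rightarrow> 'a) set"
    using ddual_eq_dot_dual[OF \<open>1 < q\<close> _ assms(5) that] assms(4) by simp
  have C: "vs.subspace C" "C \<subseteq> Lnq n" using assms(6,7) by simp_all
  define R where "R = {j. 1 \<le> j \<and> j \<le> n - 1 \<and> coprime j n}"
  have "finite R" "R \<noteq> {}"
    using assms(4) by (auto simp: R_def intro!: exI[of _ 1])
  have hval: "hval q n X = Max ((\<lambda>j. cdim (X \<inter> cshift q n j X)) ` R)" for X :: "(nat \<Rightarrow> 'a) set"
    by (simp add: hval_def R_def setcompr_eq_image)
  have "ddual q n (cshift q n i C) = cshift q n i (ddual q n C)" for i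
    by (simp add: dual C(1) subspace_cshift[OF q C(1)] dot_dual_cshift[OF q])
  moreover have "int (hval q n (dot_dual n C)) = int (hval q n C) + (int n - 2 * int k)"
    unfolding hval using \<open>finite R\<close> \<open>R \<noteq> {}\<close>
  proof (rule int_Max_image_shift)
    show "int (cdim (dot_dual n C \<inter> cshift q n j (dot_dual n C)))
        = int (cdim (C \<inter> cshift q n j C)) + (int n - 2 * int k)" for j
      using dim_dot_dual_Int_cshift[OF q C, of j] assms(8) by (simp add: cdim_def)
  qed
  ultimately show ?thesis by (simp add: dual C(1))
qed

end
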